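(* For every $\epsilon>0$ and every $\mathbf{x}=(x,y,z)\in\mathbb{R}^3\setminus N$, $$\frac{\partial R_\epsilon}{\partial z}(\mathbf{x})=0\iff z=0 .$$
   Context: Fix $\mu>0$, $\lambda>0$, $e\in(0,1)$ and set $a=\lambda^2/\mu$. For $\mathbf{x}=(x,y,z)\in\mathbb{R}^3$ with Euclidean norm $|\mathbf{x}|$ let $\nu(\mathbf{x})=\frac{\mu}{\lambda^2}\big(|\mathbf{x}|-\frac{x}{e}-\frac{\mathrm{i}y\sqrt{1-e^2}}{e}\big)\in\mathbb{C}$. $\sqrt{\cdot}$ denotes the principal branch of the complex square root (cut along $(-\infty,0]$). Let $N=\{0\}\cup\{\mathbf{x}: y=0,\ \nu(\mathbf{x})\in[0,4]\}$ (a closed Lebesgue-null set). For $\epsilon>0$ define on $\mathbb{R}^3\setminus N$ the real analytic function $$R_\epsilon(\mathbf{x})=\frac{\lambda}{\epsilon^2}\Big[\ln|\nu|+2\ln\big|1+\sqrt{1-4/\nu}\big|-\frac{\mu|\mathbf{x}|}{\lambda^2}+\tfrac12\operatorname{Re}\big(\nu(1-\sqrt{1-4/\nu})\big)\Big],$$ i.e. $R_\epsilon=\operatorname{Re}\log\psi_\epsilon$ for the limiting wave function $\psi_\epsilon=\nu^{\lambda/\epsilon^2}(1+\sqrt{1-4/\nu})^{2\lambda/\epsilon^2}\exp\big(-\frac{\mu|\mathbf{x}|}{\lambda\epsilon^2}+\frac{\lambda\nu}{2\epsilon^2}(1-\sqrt{1-4/\nu})\big)$. Put $R:=\epsilon^2R_\epsilon$,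 which is independent of $\epsilon$. *)

theory Defs
  imports "HOL-Analysis.Analysis"
begin

definition enorm3 :: "real \<Rightarrow> real \<Rightarrow> real \<Rightarrow> real" where
  "enorm3 x y z = sqrt (x^2 + y^2 + z^2)"

definition nu :: "real \<Rightarrow> real \<Rightarrow> real \<Rightarrow> real \<Rightarrow> real \<Rightarrow> real \<Rightarrow> complex" where
  "nu mu lam e x y z = complex_of_real (mu / lam^2) *
     (complex_of_real (enorm3 x y z) - complex_of_real (x / e)
      - \<i> * complex_of_real (y * sqrt (1 - e^2) / e))"

definition Nset :: "real \<Rightarrow> real \<Rightarrow> real \<Rightarrow> (real \<times> real \<times> real) set" where
  "Nset mu lam e = {(x,y,z). (x = 0 \<and> y = 0 \<and> z = 0) \<or>
      (y = 0 \<and> nu mu lam e x y z \<in> complex_of_real ` {0..4})}"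

definition R_eps :: "real \<Rightarrow> real \<Rightarrow> real \<Rightarrow> real \<Rightarrow> real \<Rightarrow> real \<Rightarrow> real \<Rightarrow> real" where
  "R_eps mu lam e eps x y z =
     (let v = nu mu lam e x y z in
      lam / eps^2 * (ln (cmod v) + 2 * ln (cmod (1 + csqrt (1 - 4 / v)))
        - mu * enorm3 x y z / lam^2 + (1/2) * Re (v * (1 - csqrt (1 - 4 / v)))))"

end

theory Submission
  imports Defs
begin

(*
  The point z enters R_eps only through the radius r = |x|, since
  nu = c (r - p) is affine in r, with c = mu/lam^2 > 0 and p = x/e + i y sqrt(1-e^2)/e.
  Writing psi_exponent v = 2 Ln (1 + w) + v (1 - w)/2 with w = csqrt (1 - 4/v), we have
    R_eps = lam/eps^2 * (ln |nu| + Re (psi_exponent nu) - c r).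
  The complex derivative of psi_exponent is (1 - w)/2 - 1/v; together with the
  derivative Re (c/nu) of ln |nu| this gives dR_eps/dr = -(lam/eps^2) c (1 + Re w)/2,
  which is strictly negative because Re w >= 0.  Hence by the chain rule
  dR_eps/dz = (dR_eps/dr) * z/r vanishes iff z = 0.
*)

text \<open>The exponent of the nontrivial factor of the wave function, as a function of nu.\<close>
definition psi_exponent :: "complex \<Rightarrow> complex" where
  "psi_exponent v = 2 * Ln (1 + csqrt (1 - 4 / v)) + v * (1 - csqrt (1 - 4 / v)) / 2"

definition nu_radial :: "real \<Rightarrow> real \<Rightarrow> real \<Rightarrow> real \<Rightarrow> real \<Rightarrow> complex \<Rightarrow> complex" where
  "nu_radial mu lam e x y u =
     of_real (mu / lam^2) * (u - of_real (x / e) - \<i> * of_real (y * sqrt (1 - e^2) / e))"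

(* Since Re (csqrt q) >= 0, the argument 1 + csqrt q of Ln stays off its branch cut. *)
lemma one_plus_csqrt_nonpos: "1 + csqrt q \<notin> \<real>\<^sub>\<le>\<^sub>0"
proof -
  have "1 \<le> Re (1 + csqrt q)"
    using Re_csqrt[of q] by simp
  then show ?thesis
    unfolding complex_nonpos_Reals_iff by linarith
qed

(* Outside the segment [0,4], v is nonzero and 1 - 4/v avoids the cut of csqrt;
   this is exactly why N contains the preimage of [0,4]. *)
lemma off_segment_regular:
  assumes "v \<notin> complex_of_real ` {0..4}"
  shows "v \<noteq> 0" and "1 - 4 / v \<notin> \<real>\<^sub>\<le>\<^sub>0"
proof -
  show v0: "v \<noteq> 0"
    using assms by (metis atLeastAtMost_iff image_eqI of_real_0 order_refl zero_le_numeral)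
  show "1 - 4 / v \<notin> \<real>\<^sub>\<le>\<^sub>0"
  proof
    assume "1 - 4 / v \<in> \<real>\<^sub>\<le>\<^sub>0"
    then obtain q where q: "1 - 4 / v = of_real q" "q \<le> 0"
      by (auto simp: nonpos_Reals_def)
    then have "v = of_real (4 / (1 - q))"
      using v0 by (simp add: field_simps)
    moreover have "4 / (1 - q) \<in> {0..4}"
      using q(2) by (auto simp: field_simps)
    ultimately show False
      using assms by blast
  qed
qed


(* The key identity: with w = csqrt (1 - 4/v), the derivative of psi_exponent is
   (1 - w)/2 - 1/v.  It uses 1/(1 + w) = v (1 - w)/4, i.e. w^2 = 1 - 4/v. *)
lemma has_field_derivative_psi_exponent:
  assumes v: "v \<noteq> 0" and cut: "1 - 4 / v \<notin> \<real>\<^sub>\<le>\<^sub>0"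
  shows "(psi_exponent has_field_derivative (1 - csqrt (1 - 4 / v)) / 2 - 1 / v) (at v)"
proof -
  define w where "w = csqrt (1 - 4 / v)"
  have w2: "w\<^sup>2 = 1 - 4 / v" unfolding w_def by simp
  have w0: "w \<noteq> 0" using cut unfolding w_def by (auto simp: csqrt_eq_0)
  have w1: "1 + w \<noteq> 0" using one_plus_csqrt_nonpos[of "1 - 4 / v"] unfolding w_def by auto
  have "(psi_exponent has_field_derivative
          2 * ((4 / v\<^sup>2) / (2 * w) / (1 + w)) + ((1 - w) - v * ((4 / v\<^sup>2) / (2 * w))) / 2) (at v)"
    unfolding psi_exponent_def[abs_def] w_def
    using v cut one_plus_csqrt_nonpos[of "1 - 4 / v"]
    by (auto intro!: derivative_eq_intros simp: field_simps power2_eq_square)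
  moreover have "2 * ((4 / v\<^sup>2) / (2 * w) / (1 + w)) + ((1 - w) - v * ((4 / v\<^sup>2) / (2 * w))) / 2
      = (1 - w) / 2 - 1 / v"
  proof -
    have "(1 + w) * (v * (1 - w) / 4) = 1"
      using w2 v by (simp add: field_simps power2_eq_square)
    then have inv: "1 / (1 + w) = v * (1 - w) / 4"
      using w1 by (simp add: field_simps)
    have "2 * ((4 / v\<^sup>2) / (2 * w) / (1 + w)) = 4 / (v\<^sup>2 * w) * (1 / (1 + w))"
      by (simp add: field_simps)
    then show ?thesis unfolding inv using v w0 by (simp add: field_simps power2_eq_square)
  qed
  ultimately show ?thesis unfolding w_def by simp
qed

lemma has_real_derivative_Re_comp:
  assumes "(h has_field_derivative h') (at (of_real s))"
  shows "((\<lambda>t. Re (h (of_real t))) has_real_derivative Re h') (at s)"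
  using bounded_linear.has_vector_derivative[OF bounded_linear_Re
          has_vector_derivative_real_field[OF assms]]
  by (simp add: has_real_derivative_iff_has_vector_derivative)

(* d/dt ln |h t| = Re (h'/h) along the real axis.  Locally ln |h| = Re (Ln (k h))
   for a unimodular k rotating h(s) onto the positive axis, avoiding the cut of Ln. *)
lemma has_real_derivative_ln_cmod:
  assumes h: "(h has_field_derivative h') (at (of_real s))" and nz: "h (of_real s) \<noteq> 0"
  shows "((\<lambda>t. ln (cmod (h (of_real t)))) has_real_derivative Re (h' / h (of_real s))) (at s)"
proof -
  define u where "u = h (of_real s)"
  define k where "k = cnj u / of_real (cmod u)"
  have "cnj u * u = of_real (cmod u) ^ 2"
    by (simp flip: complex_norm_square add: mult.commute)
  then have ku: "k * u = of_real (cmod u)"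
    using nz by (simp add: k_def u_def field_simps power2_eq_square)
  have k1: "cmod k = 1"
    using nz by (simp add: k_def u_def norm_divide)
  have "0 < cmod u"
    using nz by (simp add: u_def)
  then have cut: "k * u \<notin> \<real>\<^sub>\<le>\<^sub>0"
    unfolding ku complex_nonpos_Reals_iff by simp
  have "((\<lambda>z. Ln (k * h z)) has_field_derivative h' / h (of_real s)) (at (of_real s))"
    using cut nz unfolding u_def
    by (auto intro!: derivative_eq_intros h simp: field_simps)
  then have "((\<lambda>t. Re (Ln (k * h (of_real t)))) has_real_derivative Re (h' / h (of_real s))) (at s)"
    by (rule has_real_derivative_Re_comp)
  moreover have "\<forall>\<^sub>F t in nhds s. h (of_real t) \<noteq> 0"
  proof -
    have "isCont (of_real :: real \<Rightarrow> complex) s"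
      by (intro continuous_intros)
    from isCont_o2[OF this DERIV_isCont[OF h]]
    have "isCont (\<lambda>t. h (of_real t)) s" .
    then have "((\<lambda>t. h (of_real t)) \<longlongrightarrow> h (of_real s)) (nhds s)"
      using tendsto_at_iff_tendsto_nhds[of "\<lambda>t. h (of_real t)" s] by (simp add: isCont_def)
    from tendsto_imp_eventually_ne[OF this nz] show ?thesis .
  qed
  then have "\<forall>\<^sub>F t in nhds s. ln (cmod (h (of_real t))) = Re (Ln (k * h (of_real t)))"
  proof eventually_elim
    case (elim t)
    then have "k * h (of_real t) \<noteq> 0" using k1 by auto
    then show ?case by (simp add: norm_mult k1)
  qed
  ultimately show ?thesis
    by (subst DERIV_cong_ev[OF refl _ refl]) auto
qed

(* The radial derivative of Re log psi (without the linear term): the -1/v in the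
   derivative of psi_exponent cancels against the derivative of ln |V|. *)
lemma has_real_derivative_log_wave:
  assumes V: "(V has_field_derivative V') (at (of_real s))"
    and nz: "V (of_real s) \<noteq> 0" and cut: "1 - 4 / V (of_real s) \<notin> \<real>\<^sub>\<le>\<^sub>0"
  shows "((\<lambda>t. ln (cmod (V (of_real t))) + Re (psi_exponent (V (of_real t))))
           has_real_derivative Re (V' * (1 - csqrt (1 - 4 / V (of_real s))) / 2)) (at s)"
proof -
  define v where "v = V (of_real s)"
  define w where "w = csqrt (1 - 4 / v)"
  have "((\<lambda>z. psi_exponent (V z)) has_field_derivative ((1 - w) / 2 - 1 / v) * V') (at (of_real s))"
    using DERIV_chain2[OF has_field_derivative_psi_exponent V] nz cut by (simp add: v_def w_def)
  from DERIV_add[OF has_real_derivative_ln_cmod[OF V nz] has_real_derivative_Re_comp[OF this]]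
  have "((\<lambda>t. ln (cmod (V (of_real t))) + Re (psi_exponent (V (of_real t))))
           has_real_derivative Re (V' / v) + Re (((1 - w) / 2 - 1 / v) * V')) (at s)"
    unfolding v_def .
  moreover have "V' / v + ((1 - w) / 2 - 1 / v) * V' = V' * (1 - w) / 2"
    using nz by (simp add: v_def field_simps)
  then have "Re (V' / v) + Re (((1 - w) / 2 - 1 / v) * V') = Re (V' * (1 - w) / 2)"
    by (metis plus_complex.sel(1))
  ultimately show ?thesis unfolding v_def w_def by (simp only:)
qed

lemma nu_eq_nu_radial: "nu mu lam e x y z = nu_radial mu lam e x y (of_real (enorm3 x y z))"
  unfolding nu_def nu_radial_def by (rule refl)

lemma has_field_derivative_nu_radial:
  "(nu_radial mu lam e x y has_field_derivative of_real (mu / lam^2)) (at u)"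
  unfolding nu_radial_def[abs_def]
  by (auto intro!: derivative_eq_intros simp del: of_real_divide of_real_power)

(* R_eps written through the radius: ln |1 + csqrt q| = Re (Ln (1 + csqrt q)). *)
lemma R_eps_radial:
  "R_eps mu lam e eps x y z =
     lam / eps^2 * (ln (cmod (nu_radial mu lam e x y (of_real (enorm3 x y z))))
       + Re (psi_exponent (nu_radial mu lam e x y (of_real (enorm3 x y z))))
       - mu / lam^2 * enorm3 x y z)"
proof -
  have "ln (cmod (1 + csqrt q)) = Re (Ln (1 + csqrt q))" for q
    using one_plus_csqrt_nonpos[of q] by (subst Re_Ln) auto
  then show ?thesis
    by (simp add: R_eps_def Let_def psi_exponent_def nu_eq_nu_radial)
qed

lemma Im_nu_eq_0:
  assumes "mu > 0" "lam > 0" "0 < e" "e < 1" and "Im (nu mu lam e x y z) = 0"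
  shows "y = 0"
proof -
  have "Im (nu mu lam e x y z) = - (mu / lam^2) * (y * sqrt (1 - e^2) / e)"
    by (simp add: nu_def)
  moreover have "sqrt (1 - e^2) > 0"
    using assms by (simp add: power_less_one_iff abs_less_iff)
  ultimately show ?thesis
    using assms by simp
qed

lemma notin_Nset_regular:
  assumes "mu > 0" "lam > 0" "0 < e" "e < 1" and notN: "(x, y, z) \<notin> Nset mu lam e"
  shows "0 < enorm3 x y z" and "nu mu lam e x y z \<noteq> 0"
    and "1 - 4 / nu mu lam e x y z \<notin> \<real>\<^sub>\<le>\<^sub>0"
proof -
  have "x \<noteq> 0 \<or> y \<noteq> 0 \<or> z \<noteq> 0"
    using notN by (auto simp: Nset_def)
  then have "0 < x^2 + y^2 + z^2"
    by (auto simp: add_pos_nonneg add_nonneg_pos)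
  then show "0 < enorm3 x y z"
    by (simp add: enorm3_def)
  have "nu mu lam e x y z \<notin> complex_of_real ` {0..4}"
  proof
    assume seg: "nu mu lam e x y z \<in> complex_of_real ` {0..4}"
    then have "Im (nu mu lam e x y z) = 0"
      by auto
    then have "y = 0"
      by (rule Im_nu_eq_0[OF assms(1-4)])
    with seg notN show False
      by (auto simp: Nset_def)
  qed
  from off_segment_regular[OF this]
  show "nu mu lam e x y z \<noteq> 0" and "1 - 4 / nu mu lam e x y z \<notin> \<real>\<^sub>\<le>\<^sub>0" .
qed

lemma has_real_derivative_enorm3:
  assumes "0 < enorm3 x y z"
  shows "(enorm3 x y has_real_derivative z / enorm3 x y z) (at z)"
proof -
  have eq: "enorm3 x y = (\<lambda>t. sqrt (x^2 + y^2 + t^2))"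
    by (simp add: enorm3_def fun_eq_iff)
  have pos: "0 < x^2 + y^2 + z^2"
    using assms by (simp add: enorm3_def)
  have "((\<lambda>t. x^2 + y^2 + t^2) has_real_derivative 2 * z) (at z)"
    by (auto intro!: derivative_eq_intros)
  from DERIV_chain2[OF DERIV_real_sqrt[OF pos] this]
  have "((\<lambda>t. sqrt (x^2 + y^2 + t^2)) has_real_derivative z / sqrt (x^2 + y^2 + z^2)) (at z)"
    by (simp add: field_simps)
  then show ?thesis
    unfolding eq .
qed

lemma has_real_derivative_R_eps:
  assumes r0: "0 < enorm3 x y z" and nz: "nu mu lam e x y z \<noteq> 0"
    and cut: "1 - 4 / nu mu lam e x y z \<notin> \<real>\<^sub>\<le>\<^sub>0"
  shows "((\<lambda>t. R_eps mu lam e eps x y t) has_real_derivative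
           - (lam / eps^2) * (mu / lam^2) * (1 + Re (csqrt (1 - 4 / nu mu lam e x y z))) / 2
             * (z / enorm3 x y z)) (at z)"
proof -
  define c where "c = mu / lam^2"
  define V where "V = nu_radial mu lam e x y"
  define r where "r = enorm3 x y z"
  define w where "w = csqrt (1 - 4 / V (of_real r))"
  have nuV: "nu mu lam e x y z = V (of_real r)"
    by (simp add: V_def r_def nu_eq_nu_radial)
  define profile where
    "profile = (\<lambda>s. lam / eps^2 * (ln (cmod (V (of_real s))) + Re (psi_exponent (V (of_real s))) - c * s))"
  have R: "(\<lambda>t. R_eps mu lam e eps x y t) = profile \<circ> enorm3 x y"
    by (simp add: fun_eq_iff profile_def R_eps_radial V_def c_def)
  have "((\<lambda>s. ln (cmod (V (of_real s))) + Re (psi_exponent (V (of_real s))))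
          has_real_derivative Re (of_real c * (1 - w) / 2)) (at r)"
    using has_real_derivative_log_wave[OF has_field_derivative_nu_radial] nz cut
    unfolding nuV by (simp add: V_def w_def c_def)
  then have profile_deriv:
      "(profile has_real_derivative lam / eps^2 * (Re (of_real c * (1 - w) / 2) - c)) (at r)"
    unfolding profile_def by (intro DERIV_cmult DERIV_diff DERIV_cmult_Id)
  have "Re (of_real c * (1 - w) / 2) - c = - c * (1 + Re w) / 2"
    by (simp add: field_simps)
  then have "lam / eps^2 * (Re (of_real c * (1 - w) / 2) - c) = - (lam / eps^2) * c * (1 + Re w) / 2"
    by (simp only:)
  with profile_deriv have "(profile has_real_derivative - (lam / eps^2) * c * (1 + Re w) / 2) (at r)"
    by (rule DERIV_cong)
  from DERIV_chain[OF this[unfolded r_def] has_real_derivative_enorm3[OF r0]]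
  show ?thesis
    unfolding R nuV w_def r_def c_def .
qed

theorem lemma5p1:
  fixes mu lam e eps x y z :: real
  assumes "mu > 0" and "lam > 0" and "0 < e" and "e < 1"
    and "eps > 0"
    and "(x, y, z) \<notin> Nset mu lam e"
  shows "deriv (\<lambda>t. R_eps mu lam e eps x y t) z = 0 \<longleftrightarrow> z = 0"
proof -
  note regular = notin_Nset_regular[OF assms(1-4,6)]
  define w where "w = csqrt (1 - 4 / nu mu lam e x y z)"
  define D where "D = - (lam / eps^2) * (mu / lam^2) * (1 + Re w) / 2"
  have "deriv (\<lambda>t. R_eps mu lam e eps x y t) z = D * (z / enorm3 x y z)"
    using DERIV_imp_deriv[OF has_real_derivative_R_eps[OF regular]] by (simp add: D_def w_def)
  moreover have "D < 0"
    using assms(1,2,5) Re_csqrt[of "1 - 4 / nu mu lam e x y z"] by (simp add: D_def w_def[symmetric])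
  ultimately show ?thesis
    using regular(1) by simp
qed

end
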